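(* The non-orientable genus of $K_6^3$ is $6$, i.e. $\widetilde{\mathsf{g}}(K_6^3)=6$.
   Context: $K_6^3$ is the complete $3$-uniform hypergraph on $\{1,\dots,6\}$ (edges: all $20$ triples). Its non-orientable genus is the non-orientable genus of its Levi graph, the bipartite graph with vertex set $[6]\sqcup\binom{[6]}{3}$ in which $i$ is adjacent to a triple $t$ iff $i\in t$. The non-orientable genus of a graph is the minimum $c$ such that it embeds in the non-orientable surface with $c$ crosscaps. *)

theory Defs
  imports Main "HOL-Combinatorics.Permutations"
begin

text \<open>Embeddings into surfaces are encoded combinatorially by general rotation systems
  (embedding schemes, Mohar--Thomassen): a rotation (cyclic permutation of the
  neighbours) at each vertex plus an edge signature (twisted / untwisted).\<close>

definition nbrs :: "'a set set \<Rightarrow> 'a \<Rightarrow> 'a set" where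
  "nbrs E v = {u. {v, u} \<in> E}"

definition is_rotation :: "'a set \<Rightarrow> 'a set set \<Rightarrow> ('a \<Rightarrow> 'a \<Rightarrow> 'a) \<Rightarrow> bool" where
  "is_rotation V E rot \<longleftrightarrow>
     (\<forall>v\<in>V. rot v permutes nbrs E v \<and>
        (\<forall>u\<in>nbrs E v. \<forall>w\<in>nbrs E v. \<exists>k. (rot v ^^ k) u = w))"

text \<open>Flags: (v, u, s) for a dart v->u (i.e. an edge {v,u}) and a side s
  (True = left of the dart w.r.t. the local rotation at v).\<close>

definition flags :: "'a set set \<Rightarrow> ('a \<times> 'a \<times> bool) set" where
  "flags E = {(v, u, s). {v, u} \<in> E}"

definition tau0 :: "('a set \<Rightarrow> bool) \<Rightarrow> 'a \<times> 'a \<times> bool \<Rightarrow> 'a \<times> 'a \<times> bool" where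
  "tau0 tw x = (case x of (v, u, s) \<Rightarrow> (u, v, if tw {v, u} then s else \<not> s))"

text \<open>Move across the corner at v.\<close>
definition tau1 :: "('a \<Rightarrow> 'a \<Rightarrow> 'a) \<Rightarrow> 'a \<times> 'a \<times> bool \<Rightarrow> 'a \<times> 'a \<times> bool" where
  "tau1 rot x = (case x of (v, u, s) \<Rightarrow>
      (if s then (v, rot v u, False) else (v, inv (rot v) u, True)))"

definition face_rel ::
  "'a set set \<Rightarrow> ('a \<Rightarrow> 'a \<Rightarrow> 'a) \<Rightarrow> ('a set \<Rightarrow> bool) \<Rightarrow> (('a \<times> 'a \<times> bool) \<times> ('a \<times> 'a \<times> bool)) set" where
  "face_rel E rot tw =
     {(x, y). x \<in> flags E \<and> y \<in> flags E \<and>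
        (x, y) \<in> ({(z, tau0 tw z) | z. z \<in> flags E} \<union> {(z, tau1 rot z) | z. z \<in> flags E})\<^sup>*}"

definition num_faces :: "'a set set \<Rightarrow> ('a \<Rightarrow> 'a \<Rightarrow> 'a) \<Rightarrow> ('a set \<Rightarrow> bool) \<Rightarrow> nat" where
  "num_faces E rot tw = card (flags E // face_rel E rot tw)"

definition euler_genus :: "'a set \<Rightarrow> 'a set set \<Rightarrow> ('a \<Rightarrow> 'a \<Rightarrow> 'a) \<Rightarrow> ('a set \<Rightarrow> bool) \<Rightarrow> int" where
  "euler_genus V E rot tw = 2 - int (card V) + int (card E) - int (num_faces E rot tw)"

text \<open>The embedding is non-orientable iff the signature is not switching-equivalent
  to the all-untwisted one (i.e. some cycle has an odd number of twisted edges).\<close>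
definition nonorientable_scheme :: "'a set \<Rightarrow> 'a set set \<Rightarrow> ('a set \<Rightarrow> bool) \<Rightarrow> bool" where
  "nonorientable_scheme V E tw \<longleftrightarrow>
     \<not> (\<exists>\<sigma> :: 'a \<Rightarrow> bool. \<forall>u v. {u, v} \<in> E \<longrightarrow> (tw {u, v} \<longleftrightarrow> \<sigma> u \<noteq> \<sigma> v))"

definition nonorientable_genus :: "'a set \<Rightarrow> 'a set set \<Rightarrow> nat" where
  "nonorientable_genus V E =
     (LEAST c. \<exists>rot tw. is_rotation V E rot \<and> nonorientable_scheme V E tw \<and>
                   int c = euler_genus V E rot tw)"

definition levi_vertices :: "'a set \<Rightarrow> 'a set set \<Rightarrow> ('a + 'a set) set" where
  "levi_vertices X H = Inl ` X \<union> Inr ` H"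

definition levi_edges :: "'a set \<Rightarrow> 'a set set \<Rightarrow> ('a + 'a set) set set" where
  "levi_edges X H = {{Inl i, Inr t} | i t. i \<in> X \<and> t \<in> H \<and> i \<in> t}"

definition hypergraph_nonorientable_genus :: "'a set \<Rightarrow> 'a set set \<Rightarrow> nat" where
  "hypergraph_nonorientable_genus X H =
     nonorientable_genus (levi_vertices X H) (levi_edges X H)"

definition K63_vertices :: "nat set" where "K63_vertices = {1..6}"
definition K63_edges :: "nat set set" where
  "K63_edges = {t. t \<subseteq> {1..6} \<and> card t = 3}"

end

theory Submission
  imports Defs "HOL-Combinatorics.Cycles"
begin

text \<open>The Levi graph of K63 has 26 vertices and 60 edges and is bipartite with minimum
  degree 2, so every face of a cellular embedding is bounded by at least four edges. Hence
  there are at most 30 faces and the Euler genus is at least 2 - 26 + 60 - 30 = 6. An explicit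
  non-orientable rotation system in which every face is a quadrilateral attains this bound.\<close>

section \<open>Cyclic permutations given by lists\<close>

lemma cycle_of_list_append:
  "cycle_of_list (xs @ [y, z]) = cycle_of_list (xs @ [y]) \<circ> transpose y z"
  by (induction xs rule: cycle_of_list.induct) (simp_all add: comp_assoc)

lemma inv_cycle_of_list: "inv (cycle_of_list cs) = cycle_of_list (rev cs)"
proof (induction cs rule: cycle_of_list.induct)
  case (1 i j cs)
  have "inv (cycle_of_list (i # j # cs)) = inv (cycle_of_list (j # cs)) \<circ> transpose i j"
    using permutation_inverse_compose[OF permutation_swap_id permutation_of_cycle] by simp
  also have "\<dots> = cycle_of_list (rev cs @ [j, i])"
    by (simp add: "1.IH" cycle_of_list_append transpose_commute)
  also have "\<dots> = cycle_of_list (rev (i # j # cs))"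
    by simp
  finally show ?case .
qed simp_all

lemma cycle_of_list_map:
  assumes "inj f" shows "cycle_of_list (map f cs) (f x) = f (cycle_of_list cs x)"
  using assms by (induction cs arbitrary: x rule: cycle_of_list.induct)
    (auto simp: transpose_def inj_eq)

lemma cycle_of_list_transitive:
  assumes "distinct cs" "u \<in> set cs" "w \<in> set cs"
  shows "\<exists>k. (cycle_of_list cs ^^ k) u = w"
proof -
  obtain i j where ij: "i < length cs" "u = cs ! i" "j < length cs" "w = cs ! j"
    using assms(2,3) by (auto simp: in_set_conv_nth)
  define k where "k = j + length cs - i"
  have "(cycle_of_list cs ^^ k) u = rotate k cs ! i"
    using cyclic_rotation[OF assms(1), of k] ij by (metis nth_map)
  also have "\<dots> = cs ! ((k + i) mod length cs)"
    using ij by (simp add: nth_rotate)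
  also have "(k + i) mod length cs = j"
    using ij by (simp add: k_def)
  finally show ?thesis using ij by blast
qed

lemma is_rotation_cycle_of_list:
  assumes "\<And>v. v \<in> V \<Longrightarrow> distinct (cs v) \<and> set (cs v) = nbrs E v"
  shows "is_rotation V E (\<lambda>v. cycle_of_list (cs v))"
  using assms cycle_permutes cycle_of_list_transitive unfolding is_rotation_def by metis

lemma tau1_cycle_of_list:
  "tau1 (\<lambda>a. cycle_of_list (cs a)) (a, b, s) =
     (if s then (a, cycle_of_list (cs a) b, False) else (a, cycle_of_list (rev (cs a)) b, True))"
  by (simp add: tau1_def inv_cycle_of_list)

section \<open>Faces of an embedding scheme\<close>

lemma tau0_tau0 [simp]: "tau0 tw (tau0 tw x) = x"
  by (cases x) (simp add: tau0_def insert_commute)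

lemma tau0_in_flags: "x \<in> flags E \<Longrightarrow> tau0 tw x \<in> flags E"
  by (cases x) (simp add: tau0_def flags_def insert_commute)

lemma card_flags:
  assumes "finite E" "\<And>e. e \<in> E \<Longrightarrow> card e = 2"
  shows "card (flags E) = 4 * card E"
proof -
  define darts where "darts e = {(v, u). {v, u} = e}" for e :: "'a set"
  have darts_doubleton: "darts e = {(a, b), (b, a)}" if "e = {a, b}" for e a b
    using that by (auto simp: darts_def doubleton_eq_iff)
  have card_darts: "card (darts e) = 2" and finite_darts: "finite (darts e)" if e: "e \<in> E" for e
  proof -
    obtain a b where "a \<noteq> b" "e = {a, b}" using assms(2)[OF e] by (auto simp: card_2_iff)
    then show "card (darts e) = 2" "finite (darts e)" by (simp_all add: darts_doubleton)
  qed
  have "flags E = (\<lambda>((v, u), s). (v, u, s)) ` ((\<Union>e\<in>E. darts e) \<times> UNIV)"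
    by (auto simp: flags_def darts_def image_iff)
  moreover have "inj (\<lambda>((v, u), s). (v, u, s) :: 'a \<times> 'a \<times> bool)"
    by (auto simp: inj_def)
  ultimately have "card (flags E) = 2 * card (\<Union>e\<in>E. darts e)"
    by (simp add: card_image inj_on_subset card_cartesian_product)
  also have "card (\<Union>e\<in>E. darts e) = (\<Sum>e\<in>E. card (darts e))"
    using assms(1) finite_darts by (intro card_UN_disjoint) (auto simp: darts_def)
  also have "\<dots> = 2 * card E"
    using card_darts by simp
  finally show ?thesis by simp
qed

locale embedding_scheme =
  fixes V :: "'a set" and E :: "'a set set" and rot :: "'a \<Rightarrow> 'a \<Rightarrow> 'a" and tw :: "'a set \<Rightarrow> bool"
  assumes finite_edges: "finite E"
    and card_edge: "\<And>e. e \<in> E \<Longrightarrow> card e = 2"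
    and edge_endpoint: "\<And>a b. {a, b} \<in> E \<Longrightarrow> a \<in> V"
    and rotation: "is_rotation V E rot"
begin

abbreviation "faces \<equiv> flags E // face_rel E rot tw"

lemma rot_permutes: "v \<in> V \<Longrightarrow> rot v permutes nbrs E v"
  using rotation by (simp add: is_rotation_def)

lemma flag_vertex: "(v, u, s) \<in> flags E \<Longrightarrow> v \<in> V \<and> u \<in> nbrs E v"
  using edge_endpoint by (auto simp: flags_def nbrs_def)

lemma tau1_in_flags: "x \<in> flags E \<Longrightarrow> tau1 rot x \<in> flags E"
proof (cases x)
  case (fields v u s)
  assume "x \<in> flags E"
  then have "v \<in> V" "u \<in> nbrs E v" using fields flag_vertex by auto
  then have "rot v u \<in> nbrs E v" "inv (rot v) u \<in> nbrs E v"
    using permutes_in_image[OF rot_permutes] permutes_in_image[OF permutes_inv[OF rot_permutes]]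
    by auto
  then show ?thesis using fields by (auto simp: tau1_def flags_def nbrs_def)
qed

lemma tau1_tau1: "x \<in> flags E \<Longrightarrow> tau1 rot (tau1 rot x) = x"
proof (cases x)
  case (fields v u s)
  assume "x \<in> flags E"
  then have "v \<in> V" using fields flag_vertex by auto
  then show ?thesis using fields permutes_inverses[OF rot_permutes] by (auto simp: tau1_def)
qed

lemma finite_flags: "finite (flags E)"
proof -
  have "finite (\<Union>E)"
    using finite_edges card_edge by (metis card_eq_0_iff finite_Union zero_neq_numeral)
  moreover have "flags E \<subseteq> \<Union>E \<times> \<Union>E \<times> UNIV"
    by (auto simp: flags_def)
  ultimately show ?thesis by (simp add: finite_subset)
qed

abbreviation "face_step \<equiv> {(x, tau0 tw x) | x. x \<in> flags E} \<union> {(x, tau1 rot x) | x. x \<in> flags E}"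

lemma sym_face_step: "sym face_step"
proof (rule symI)
  fix x y assume "(x, y) \<in> face_step"
  then consider "x \<in> flags E" "y = tau0 tw x" | "x \<in> flags E" "y = tau1 rot x"
    by blast
  then show "(y, x) \<in> face_step"
  proof cases
    case 1
    then show ?thesis using tau0_in_flags[of x E tw] tau0_tau0[of tw x] by force
  next
    case 2
    then show ?thesis using tau1_in_flags[of x] tau1_tau1[of x] by force
  qed
qed

lemma equiv_face_rel: "equiv (flags E) (face_rel E rot tw)"
proof (rule equivI)
  show "face_rel E rot tw \<subseteq> flags E \<times> flags E"
    by (auto simp: face_rel_def)
  show "refl_on (flags E) (face_rel E rot tw)"
    by (auto simp: refl_on_def face_rel_def)
  show "sym (face_rel E rot tw)"
    using sym_rtrancl[OF sym_face_step] by (auto simp: face_rel_def sym_def)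
  show "trans (face_rel E rot tw)"
    by (auto simp: trans_def face_rel_def intro: rtrancl_trans)
qed

lemma face_rel_step:
  assumes "(x, y) \<in> face_rel E rot tw"
  shows "(x, tau0 tw y) \<in> face_rel E rot tw" "(x, tau1 rot y) \<in> face_rel E rot tw"
proof -
  have y: "y \<in> flags E" and xy: "(x, y) \<in> face_step\<^sup>*" and x: "x \<in> flags E"
    using assms by (auto simp: face_rel_def)
  have "(y, tau0 tw y) \<in> face_step" "(y, tau1 rot y) \<in> face_step"
    using y by blast+
  then show "(x, tau0 tw y) \<in> face_rel E rot tw" "(x, tau1 rot y) \<in> face_rel E rot tw"
    using rtrancl_into_rtrancl[OF xy] x tau0_in_flags[OF y] tau1_in_flags[OF y]
    by (simp_all add: face_rel_def)
qed

lemma face_subset: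
  assumes "x \<in> S" "\<And>y. y \<in> S \<Longrightarrow> tau0 tw y \<in> S" "\<And>y. y \<in> S \<Longrightarrow> tau1 rot y \<in> S"
  shows "face_rel E rot tw `` {x} \<subseteq> S"
proof
  fix y assume "y \<in> face_rel E rot tw `` {x}"
  then have "(x, y) \<in> face_step\<^sup>*" by (auto simp: face_rel_def)
  then show "y \<in> S"
    by (induction rule: rtrancl_induct) (use assms in auto)
qed

lemma finite_face: "X \<in> faces \<Longrightarrow> finite X"
  using finite_flags equiv_face_rel by (meson in_quotient_imp_subset finite_subset)

lemma card_flags_eq_sum_faces: "card (flags E) = (\<Sum>X\<in>faces. card X)"
  using card_Union_disjoint[of faces] Union_quotient[OF equiv_face_rel]
    quotient_disj[OF equiv_face_rel] finite_face
  by (metis disjnt_def pairwise_def)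

lemma num_faces_lower:
  assumes "\<And>X. X \<in> faces \<Longrightarrow> k \<le> card X"
  shows "k * num_faces E rot tw \<le> card (flags E)"
  using sum_mono[of faces "\<lambda>_. k" card] assms
  by (simp add: num_faces_def card_flags_eq_sum_faces mult.commute)

lemma num_faces_upper:
  assumes "\<And>X. X \<in> faces \<Longrightarrow> card X \<le> k"
  shows "card (flags E) \<le> k * num_faces E rot tw"
  using sum_mono[of faces card "\<lambda>_. k"] assms
  by (simp add: num_faces_def card_flags_eq_sum_faces mult.commute)

lemma other_neighbour:
  assumes "u \<in> nbrs E v" "2 \<le> card (nbrs E v)"
  obtains w where "w \<in> nbrs E v" "w \<noteq> u"
proof -
  have "\<not> nbrs E v \<subseteq> {u}"
    using assms(2) card_mono[of "{u}" "nbrs E v"] by auto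
  then show ?thesis using that by blast
qed

lemma tau1_changes_neighbour:
  assumes "(v, u, s) \<in> flags E" "2 \<le> card (nbrs E v)"
  obtains u' s' where "tau1 rot (v, u, s) = (v, u', s')" "u' \<noteq> u"
proof -
  have v: "v \<in> V" and u: "u \<in> nbrs E v"
    using assms(1) flag_vertex by auto
  obtain w where w: "w \<in> nbrs E v" "w \<noteq> u"
    using other_neighbour[OF u assms(2)] .
  have no_fix: "rot v u \<noteq> u"
  proof
    assume "rot v u = u"
    then have "(rot v ^^ k) u = u" for k by (induction k) simp_all
    moreover have "\<exists>k. (rot v ^^ k) u = w"
      using rotation v u w by (auto simp: is_rotation_def)
    ultimately show False using w by simp
  qed
  then have "inv (rot v) u \<noteq> u"
    using permutes_inverses(1)[OF rot_permutes[OF v]] by metis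
  with no_fix show ?thesis using that by (cases s) (auto simp: tau1_def)
qed

abbreviation "face_walk \<equiv> tau1 rot \<circ> tau0 tw"

definition walk_flags :: "nat \<Rightarrow> 'a \<times> 'a \<times> bool \<Rightarrow> ('a \<times> 'a \<times> bool) set" where
  "walk_flags n x = (\<lambda>k. (face_walk ^^ k) x) ` {..<n} \<union> (\<lambda>k. tau0 tw ((face_walk ^^ k) x)) ` {..<n}"

lemma face_walk_in_flags: "x \<in> flags E \<Longrightarrow> (face_walk ^^ k) x \<in> flags E"
  by (induction k) (simp_all add: tau0_in_flags tau1_in_flags)

lemma card_walk_flags_le: "card (walk_flags n x) \<le> 2 * n"
proof -
  have "card (walk_flags n x) \<le>
      card ((\<lambda>k. (face_walk ^^ k) x) ` {..<n}) + card ((\<lambda>k. tau0 tw ((face_walk ^^ k) x)) ` {..<n})"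
    unfolding walk_flags_def by (rule card_Un_le)
  also have "\<dots> \<le> card {..<n} + card {..<n}"
    by (intro add_mono card_image_le) simp_all
  finally show ?thesis by simp
qed

lemma walk_flags_subset_face:
  assumes "x \<in> flags E" shows "walk_flags n x \<subseteq> face_rel E rot tw `` {x}"
proof -
  have "(x, (face_walk ^^ k) x) \<in> face_rel E rot tw" for k
  proof (induction k)
    case 0
    then show ?case using assms by (simp add: face_rel_def)
  next
    case (Suc k)
    then show ?case by (simp add: face_rel_step)
  qed
  then show ?thesis
    unfolding walk_flags_def by (blast intro: face_rel_step(1))
qed

text \<open>Since tau0 and tau1 are involutions, the face of x is the face_walk-orbit of x
  together with its tau0-image.\<close>

lemma face_subset_walk_flags:
  assumes periodic: "\<And>x. x \<in> flags E \<Longrightarrow> (face_walk ^^ n) x = x"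
    and "0 < n" and x: "x \<in> flags E"
  shows "face_rel E rot tw `` {x} \<subseteq> walk_flags n x"
proof (rule face_subset)
  let ?W = "(\<lambda>k. (face_walk ^^ k) x) ` {..<n}"
  have W_pred: "\<exists>j<n. y = tau1 rot (tau0 tw ((face_walk ^^ j) x))" if "y \<in> ?W" for y
  proof -
    obtain k where "k < n" and y: "y = (face_walk ^^ k) x"
      using \<open>y \<in> ?W\<close> by blast
    then have "y = (face_walk ^^ Suc (if k = 0 then n - 1 else k - 1)) x"
      using periodic[OF x] \<open>0 < n\<close> by (cases k) simp_all
    then show ?thesis
      using \<open>k < n\<close> \<open>0 < n\<close> by (intro exI[of _ "if k = 0 then n - 1 else k - 1"]) auto
  qed
  have W_succ: "tau1 rot (tau0 tw ((face_walk ^^ k) x)) \<in> ?W" if "k < n" for k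
  proof -
    have "tau1 rot (tau0 tw ((face_walk ^^ k) x)) = (face_walk ^^ (if Suc k = n then 0 else Suc k)) x"
      using periodic[OF x] by auto
    then show ?thesis
      using \<open>k < n\<close> \<open>0 < n\<close> by auto
  qed
  show "x \<in> walk_flags n x"
    using \<open>0 < n\<close> by (force simp: walk_flags_def)
  show "tau0 tw y \<in> walk_flags n x" if "y \<in> walk_flags n x" for y
    using that by (auto simp: walk_flags_def)
  show "tau1 rot y \<in> walk_flags n x" if y: "y \<in> walk_flags n x" for y
  proof (cases "y \<in> ?W")
    case True
    then obtain j where "j < n" "y = tau1 rot (tau0 tw ((face_walk ^^ j) x))"
      using W_pred by blast
    then have "tau1 rot y = tau0 tw ((face_walk ^^ j) x)"
      using tau1_tau1[OF tau0_in_flags[OF face_walk_in_flags[OF x]]] by simp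
    then show ?thesis
      using \<open>j < n\<close> by (auto simp: walk_flags_def)
  next
    case False
    then obtain k where "k < n" "y = tau0 tw ((face_walk ^^ k) x)"
      using y by (auto simp: walk_flags_def)
    then show ?thesis
      using W_succ by (auto simp: walk_flags_def)
  qed
qed

text \<open>In a bipartite graph of minimum degree 2 the first four steps of a face walk pass
  through four distinct edges, so no face has fewer than 8 flags.\<close>

lemma card_walk_flags_4:
  fixes side :: "'a \<Rightarrow> bool"
  assumes bipartite: "\<And>a b. {a, b} \<in> E \<Longrightarrow> side a \<noteq> side b"
    and min_degree: "\<And>v. v \<in> V \<Longrightarrow> 2 \<le> card (nbrs E v)"
    and x: "x \<in> flags E"
  shows "card (walk_flags 4 x) = 8"
proof -
  define x1 where "x1 = tau0 tw x"
  define x2 where "x2 = tau1 rot x1"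
  define x3 where "x3 = tau0 tw x2"
  define x4 where "x4 = tau1 rot x3"
  define x5 where "x5 = tau0 tw x4"
  define x6 where "x6 = tau1 rot x5"
  define x7 where "x7 = tau0 tw x6"
  have "{..<4} = {0, Suc 0, Suc (Suc 0), Suc (Suc (Suc 0))}"
    by auto
  then have walk_flags_eq: "walk_flags 4 x = set [x, x1, x2, x3, x4, x5, x6, x7]"
    by (auto simp: walk_flags_def x1_def x2_def x3_def x4_def x5_def x6_def x7_def)
  have in_flags: "x1 \<in> flags E" "x2 \<in> flags E" "x3 \<in> flags E" "x4 \<in> flags E"
      "x5 \<in> flags E" "x6 \<in> flags E"
    using x by (simp_all add: x1_def x2_def x3_def x4_def x5_def x6_def tau0_in_flags tau1_in_flags)
  have degree: "2 \<le> card (nbrs E v)" if "(v, u, s) \<in> flags E" for v u s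
    using min_degree flag_vertex[OF that] by blast
  obtain v u s0 where x_eq: "x = (v, u, s0)" by (cases x)
  obtain s1 where e1: "x1 = (u, v, s1)" by (simp add: x1_def x_eq tau0_def)
  obtain w s2 where e2: "x2 = (u, w, s2)" and "w \<noteq> v"
    using in_flags(1) tau1_changes_neighbour[OF _ degree] unfolding x2_def e1 by blast
  obtain s3 where e3: "x3 = (w, u, s3)" by (simp add: x3_def e2 tau0_def)
  obtain y s4 where e4: "x4 = (w, y, s4)" and "y \<noteq> u"
    using in_flags(3) tau1_changes_neighbour[OF _ degree] unfolding x4_def e3 by blast
  obtain s5 where e5: "x5 = (y, w, s5)" by (simp add: x5_def e4 tau0_def)
  obtain z s6 where e6: "x6 = (y, z, s6)" and "z \<noteq> w"
    using in_flags(5) tau1_changes_neighbour[OF _ degree] unfolding x6_def e5 by blast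
  obtain s7 where e7: "x7 = (z, y, s7)" by (simp add: x7_def e6 tau0_def)
  have "side v \<noteq> side u" "side u \<noteq> side w" "side w \<noteq> side y" "side y \<noteq> side z"
    using bipartite x in_flags(2,4,6) x_eq e2 e4 e6 by (auto simp: flags_def)
  then have "side w = side v" "side y = side u" "side z = side v" "side u \<noteq> side v"
    by (cases "side v"; cases "side u"; cases "side w"; cases "side y"; cases "side z"; simp)+
  then have "distinct [x, x1, x2, x3, x4, x5, x6, x7]"
    unfolding x_eq e1 e2 e3 e4 e5 e6 e7
    using \<open>w \<noteq> v\<close> \<open>y \<noteq> u\<close> \<open>z \<noteq> w\<close> by auto
  then show ?thesis
    unfolding walk_flags_eq by (subst distinct_card) simp_all
qed

lemma card_face_ge_8:
  fixes side :: "'a \<Rightarrow> bool"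
  assumes bipartite: "\<And>a b. {a, b} \<in> E \<Longrightarrow> side a \<noteq> side b"
    and min_degree: "\<And>v. v \<in> V \<Longrightarrow> 2 \<le> card (nbrs E v)"
    and X: "X \<in> faces"
  shows "8 \<le> card X"
proof -
  obtain x where x: "x \<in> flags E" and X_eq: "X = face_rel E rot tw `` {x}"
    using X by (rule quotientE)
  have "8 = card (walk_flags 4 x)"
    using card_walk_flags_4[where side = side, OF bipartite min_degree x] by simp
  also have "\<dots> \<le> card X"
    using walk_flags_subset_face[OF x] X_eq by (intro card_mono finite_face[OF X]) simp_all
  finally show ?thesis .
qed

lemma card_face_le:
  assumes "\<And>x. x \<in> flags E \<Longrightarrow> (face_walk ^^ n) x = x" and "0 < n" and X: "X \<in> faces"
  shows "card X \<le> 2 * n"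
proof -
  obtain x where x: "x \<in> flags E" and X_eq: "X = face_rel E rot tw `` {x}"
    using X by (rule quotientE)
  have "card X \<le> card (walk_flags n x)"
    using face_subset_walk_flags[OF assms(1,2) x] X_eq
    by (intro card_mono) (auto simp: walk_flags_def)
  then show ?thesis
    using card_walk_flags_le order_trans by blast
qed

lemma num_faces_bipartite:
  fixes side :: "'a \<Rightarrow> bool"
  assumes "\<And>a b. {a, b} \<in> E \<Longrightarrow> side a \<noteq> side b"
    and "\<And>v. v \<in> V \<Longrightarrow> 2 \<le> card (nbrs E v)"
  shows "2 * num_faces E rot tw \<le> card E"
  using num_faces_lower[OF card_face_ge_8[OF assms]] card_flags[OF finite_edges card_edge]
  by simp

theorem euler_genus_lower_bound_bipartite:
  fixes side :: "'a \<Rightarrow> bool"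
  assumes "\<And>a b. {a, b} \<in> E \<Longrightarrow> side a \<noteq> side b"
    and "\<And>v. v \<in> V \<Longrightarrow> 2 \<le> card (nbrs E v)"
  shows "4 - 2 * int (card V) + int (card E) \<le> 2 * euler_genus V E rot tw"
  using num_faces_bipartite[where side = side, OF assms] by (simp add: euler_genus_def)

theorem euler_genus_quadrangular:
  fixes side :: "'a \<Rightarrow> bool"
  assumes "\<And>a b. {a, b} \<in> E \<Longrightarrow> side a \<noteq> side b"
    and "\<And>v. v \<in> V \<Longrightarrow> 2 \<le> card (nbrs E v)"
    and "\<And>x. x \<in> flags E \<Longrightarrow> (face_walk ^^ 4) x = x"
  shows "2 * euler_genus V E rot tw = 4 - 2 * int (card V) + int (card E)"
proof -
  have "card E \<le> 2 * num_faces E rot tw"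
    using num_faces_upper[OF card_face_le[OF assms(3)]] card_flags[OF finite_edges card_edge]
    by simp
  then show ?thesis
    using num_faces_bipartite[where side = side, OF assms(1,2)] by (simp add: euler_genus_def)
qed

end

section \<open>Levi graphs\<close>

lemma levi_edge_card: "e \<in> levi_edges X H \<Longrightarrow> card e = 2"
  by (auto simp: levi_edges_def)

lemma levi_edge_endpoint: "{a, b} \<in> levi_edges X H \<Longrightarrow> a \<in> levi_vertices X H"
  by (auto simp: levi_edges_def levi_vertices_def doubleton_eq_iff)

lemma levi_edge_bipartite: "{a, b} \<in> levi_edges X H \<Longrightarrow> isl a \<noteq> isl b"
  by (auto simp: levi_edges_def doubleton_eq_iff)

lemma nbrs_levi_Inl:
  "i \<in> X \<Longrightarrow> nbrs (levi_edges X H) (Inl i) = Inr ` {t \<in> H. i \<in> t}"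
  by (auto simp: nbrs_def levi_edges_def doubleton_eq_iff)

lemma nbrs_levi_Inr:
  "t \<in> H \<Longrightarrow> nbrs (levi_edges X H) (Inr t) = Inl ` (t \<inter> X)"
  by (auto simp: nbrs_def levi_edges_def doubleton_eq_iff)

lemma card_levi_vertices:
  "finite X \<Longrightarrow> finite H \<Longrightarrow> card (levi_vertices X H) = card X + card H"
  by (simp add: levi_vertices_def Plus_def[symmetric] card_Plus)

lemma levi_edges_eq_image_Sigma:
  "levi_edges X H = (\<lambda>(t, i). {Inl i, Inr t}) ` (SIGMA t:H. t \<inter> X)"
  by (auto simp: levi_edges_def)

lemma card_levi_edges:
  assumes "finite X" "finite H"
  shows "card (levi_edges X H) = (\<Sum>t\<in>H. card (t \<inter> X))"
proof -
  have "inj_on (\<lambda>(t, i). {Inl i, Inr t}) (SIGMA t:H. t \<inter> X)"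
    by (auto simp: inj_on_def doubleton_eq_iff)
  then show ?thesis
    using assms by (simp add: levi_edges_eq_image_Sigma card_image card_SigmaI)
qed

section \<open>The Levi graph of K63\<close>

abbreviation "levi_K63_V \<equiv> levi_vertices K63_vertices K63_edges"
abbreviation "levi_K63_E \<equiv> levi_edges K63_vertices K63_edges"

lemma card_K63_edges: "card K63_edges = 20"
proof -
  have "card K63_edges = card {1..6::nat} choose 3"
    unfolding K63_edges_def by (rule n_subsets) simp
  also have "\<dots> = 20" by (simp add: numeral_eq_Suc)
  finally show ?thesis .
qed

lemma card_levi_K63_vertices: "card levi_K63_V = 26"
  using card_K63_edges by (simp add: card_levi_vertices K63_vertices_def K63_edges_def)

lemma card_levi_K63_edges: "card levi_K63_E = 60"
proof -
  have "card levi_K63_E = (\<Sum>t\<in>K63_edges. 3)"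
    by (auto simp: card_levi_edges K63_vertices_def K63_edges_def Int_absorb2 intro!: sum.cong)
  then show ?thesis using card_K63_edges by simp
qed

text \<open>The Levi graph of K63 is coded by the numbers 1..26: 1..6 are the points and
  7..26 the triples in lexicographic order.\<close>

definition K63_triples :: "nat list list" where
  "K63_triples = [[1,2,3],[1,2,4],[1,2,5],[1,2,6],[1,3,4],[1,3,5],[1,3,6],[1,4,5],[1,4,6],[1,5,6],
    [2,3,4],[2,3,5],[2,3,6],[2,4,5],[2,4,6],[2,5,6],[3,4,5],[3,4,6],[3,5,6],[4,5,6]]"

definition triple :: "nat \<Rightarrow> nat set" where
  "triple n = set (K63_triples ! (n - 7))"

definition levi_code :: "nat \<Rightarrow> nat + nat set" where
  "levi_code n = (if n \<in> {7..26} then Inr (triple n) else Inl n)"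

lemma Ball_atLeastAtMost_nat: "(\<forall>n\<in>{a..b::nat}. P n) \<longleftrightarrow> list_all P [a..<Suc b]"
  by (simp only: list_all_iff set_upt atLeastLessThanSuc_atLeastAtMost)

lemma K63_triples_props:
  "\<forall>n \<in> {7..26}. sorted (K63_triples ! (n - 7)) \<and> distinct (K63_triples ! (n - 7)) \<and>
     length (K63_triples ! (n - 7)) = 3 \<and> triple n \<subseteq> {1..6}"
  unfolding Ball_atLeastAtMost_nat by (simp add: upt_rec triple_def K63_triples_def)

lemma triple_props:
  assumes "n \<in> {7..26}"
  shows "sorted (K63_triples ! (n - 7))" "distinct (K63_triples ! (n - 7))"
    "card (triple n) = 3" "triple n \<subseteq> {1..6}"
  using K63_triples_props assms by (auto simp: triple_def distinct_card)

lemma inj_on_triple: "inj_on triple {7..26}"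
proof (rule inj_onI)
  fix m n :: nat assume m: "m \<in> {7..26}" and n: "n \<in> {7..26}" and "triple m = triple n"
  then have "K63_triples ! (m - 7) = K63_triples ! (n - 7)"
    using triple_props[OF m] triple_props[OF n]
    by (intro sorted_distinct_set_unique) (auto simp: triple_def)
  moreover have "distinct K63_triples" and length: "length K63_triples = 20"
    by (simp_all add: K63_triples_def)
  moreover have "m - 7 < length K63_triples" "n - 7 < length K63_triples"
    using m n length by auto
  ultimately have "m - 7 = n - 7"
    using nth_eq_iff_index_eq by blast
  then show "m = n" using m n by auto
qed

lemma inj_levi_code: "inj levi_code"
  using inj_on_triple by (auto simp: inj_def levi_code_def inj_on_eq_iff split: if_splits)

lemma K63_edges_eq: "K63_edges = triple ` {7..26}"
proof (rule card_subset_eq[symmetric])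
  show "finite K63_edges" by (simp add: K63_edges_def)
  show "triple ` {7..26} \<subseteq> K63_edges"
    unfolding K63_edges_def using triple_props(3,4) by blast
  show "card (triple ` {7..26}) = card K63_edges"
    using inj_on_triple card_K63_edges by (simp add: card_image)
qed

lemma levi_K63_vertices_eq: "levi_K63_V = levi_code ` {1..26}"
proof -
  have "{1..26::nat} = {1..6} \<union> {7..26}" by auto
  then show ?thesis
    by (auto simp: levi_vertices_def K63_vertices_def K63_edges_eq levi_code_def image_iff)
qed

text \<open>The rotation system of the quadrangular embedding constructed below. Being a list
  of the neighbours of each vertex, it also describes the Levi graph itself.\<close>

definition point_rotations :: "nat list list" where
  "point_rotations =
    [[7, 9, 12, 11, 15, 10, 8, 14, 16, 13],
     [7, 9, 22, 21, 20, 18, 19, 10, 8, 17],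
     [7, 13, 19, 18, 23, 11, 12, 25, 24, 17],
     [8, 14, 23, 11, 15, 26, 20, 21, 24, 17],
     [9, 12, 25, 16, 14, 23, 18, 20, 26, 22],
     [10, 15, 26, 22, 21, 24, 25, 16, 13, 19]]"

definition code_rotation :: "nat \<Rightarrow> nat list" where
  "code_rotation n = (if n \<in> {1..6} then point_rotations ! (n - 1) else K63_triples ! (n - 7))"

lemma code_rotation_props:
  "\<forall>a\<in>{1..26}. distinct (code_rotation a) \<and> 2 \<le> length (code_rotation a)"
  unfolding Ball_atLeastAtMost_nat
  by (simp add: upt_rec code_rotation_def point_rotations_def K63_triples_def)

lemma code_rotation_points:
  "\<forall>a\<in>{1..6}. sort (code_rotation a) = filter (\<lambda>n. a \<in> triple n) [7..<Suc 26]"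
  unfolding Ball_atLeastAtMost_nat
  by (simp add: upt_rec code_rotation_def point_rotations_def triple_def K63_triples_def)

lemma levi_code_points: "S \<subseteq> {1..6} \<Longrightarrow> levi_code ` S = Inl ` S"
  by (auto simp: levi_code_def)

lemma levi_code_triples: "S \<subseteq> {7..26} \<Longrightarrow> levi_code ` S = Inr ` triple ` S"
  by (auto simp: levi_code_def)

lemma nbrs_levi_K63:
  assumes a: "a \<in> {1..26}"
  shows "nbrs levi_K63_E (levi_code a) = levi_code ` set (code_rotation a)"
proof (cases "a \<le> 6")
  case True
  then have "sort (code_rotation a) = filter (\<lambda>n. a \<in> triple n) [7..<Suc 26]"
    using a code_rotation_points by auto
  then have "set (code_rotation a) = set (filter (\<lambda>n. a \<in> triple n) [7..<Suc 26])"
    by (metis set_sort)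
  also have "\<dots> = {n \<in> {7..26}. a \<in> triple n}"
    by (simp only: set_filter set_upt atLeastLessThanSuc_atLeastAtMost)
  finally have rotation_eq: "set (code_rotation a) = {n \<in> {7..26}. a \<in> triple n}" .
  have "nbrs levi_K63_E (levi_code a) = Inr ` {t \<in> K63_edges. a \<in> t}"
    using True a by (simp add: levi_code_def nbrs_levi_Inl K63_vertices_def)
  also have "{t \<in> K63_edges. a \<in> t} = triple ` {n \<in> {7..26}. a \<in> triple n}"
    unfolding K63_edges_eq by blast
  also have "Inr ` triple ` {n \<in> {7..26}. a \<in> triple n} = levi_code ` set (code_rotation a)"
    unfolding rotation_eq by (rule levi_code_triples[symmetric]) blast
  finally show ?thesis .
next
  case False
  then have a': "a \<in> {7..26}" using a by simp
  then have rotation_eq: "set (code_rotation a) = triple a"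
    using False by (simp add: code_rotation_def triple_def)
  have "nbrs levi_K63_E (levi_code a) = Inl ` (triple a \<inter> K63_vertices)"
    using a' by (simp add: levi_code_def nbrs_levi_Inr K63_edges_eq)
  also have "triple a \<inter> K63_vertices = triple a"
    using triple_props(4)[OF a'] by (auto simp: K63_vertices_def)
  finally show ?thesis
    using triple_props(4)[OF a'] by (simp add: rotation_eq levi_code_points)
qed

lemma levi_K63_vertices_cases:
  assumes "v \<in> levi_K63_V"
  obtains a where "a \<in> {1..26}" "v = levi_code a"
  using assms levi_K63_vertices_eq by auto

lemma levi_K63_min_degree:
  assumes "v \<in> levi_K63_V" shows "2 \<le> card (nbrs levi_K63_E v)"
proof -
  obtain a where "a \<in> {1..26}" "v = levi_code a"
    using assms by (rule levi_K63_vertices_cases)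
  then show ?thesis
    using code_rotation_props inj_on_subset[OF inj_levi_code subset_UNIV]
    by (auto simp: nbrs_levi_K63 card_image distinct_card)
qed

lemma embedding_scheme_levi_K63:
  "is_rotation levi_K63_V levi_K63_E rot \<Longrightarrow> embedding_scheme levi_K63_V levi_K63_E rot"
  by unfold_locales
    (auto simp: levi_edge_card levi_edge_endpoint levi_edges_eq_image_Sigma K63_vertices_def
      K63_edges_def)

lemma euler_genus_levi_K63_ge_6:
  assumes "is_rotation levi_K63_V levi_K63_E rot"
  shows "6 \<le> euler_genus levi_K63_V levi_K63_E rot tw"
  using embedding_scheme.euler_genus_lower_bound_bipartite[OF embedding_scheme_levi_K63[OF assms],
      of isl, OF levi_edge_bipartite levi_K63_min_degree]
  by (simp add: card_levi_K63_vertices card_levi_K63_edges)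

section \<open>A non-orientable embedding with quadrilateral faces\<close>

definition twisted_code_edges :: "(nat \<times> nat) list" where
  "twisted_code_edges =
    [(1, 7), (1, 10), (1, 12), (1, 13), (2, 8), (2, 9), (2, 17), (2, 18), (2, 21), (3, 7),
     (3, 12), (3, 13), (3, 18), (3, 23), (3, 24), (4, 8), (4, 11), (4, 14), (4, 15), (4, 17),
     (4, 21), (4, 26), (5, 9), (5, 18), (5, 23), (5, 25), (5, 26), (6, 10), (6, 16), (6, 19),
     (6, 22), (6, 24)]"

definition code_twist :: "nat set \<Rightarrow> bool" where
  "code_twist e \<longleftrightarrow> (\<exists>(a, b)\<in>set twisted_code_edges. e = {a, b})"

lemma code_twist_doubleton:
  "code_twist {a, b} \<longleftrightarrow> (a, b) \<in> set twisted_code_edges \<or> (b, a) \<in> set twisted_code_edges"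
  by (auto simp: code_twist_def doubleton_eq_iff)

abbreviation "code_rot \<equiv> \<lambda>a. cycle_of_list (code_rotation a)"

lemma funpow_4: "f ^^ 4 = f \<circ> f \<circ> f \<circ> f"
  by (simp add: eval_nat_numeral comp_assoc)

text \<open>The quantifiers are expanded before the data are unfolded, so that the
  simplifier only ever evaluates cycles at concrete points.\<close>

lemma code_faces_periodic:
  "\<forall>a\<in>{1..26}. \<forall>b\<in>set (code_rotation a). \<forall>s.
     ((tau1 code_rot \<circ> tau0 code_twist) ^^ 4) (a, b, s) = (a, b, s)"
  unfolding Ball_atLeastAtMost_nat funpow_4
  by (simp add: upt_rec)
    (simp add: all_bool_eq tau1_cycle_of_list code_rotation_def point_rotations_def
      K63_triples_def tau0_def code_twist_doubleton twisted_code_edges_def transpose_def)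

definition K63_rotation :: "nat + nat set \<Rightarrow> nat + nat set \<Rightarrow> nat + nat set" where
  "K63_rotation v = cycle_of_list (map levi_code (code_rotation (inv levi_code v)))"

definition K63_twist :: "(nat + nat set) set \<Rightarrow> bool" where
  "K63_twist e \<longleftrightarrow> (\<exists>(a, b)\<in>set twisted_code_edges. e = {levi_code a, levi_code b})"

lemma K63_rotation_levi_code:
  "K63_rotation (levi_code a) = cycle_of_list (map levi_code (code_rotation a))"
  by (simp add: K63_rotation_def inv_f_f[OF inj_levi_code])

lemma is_rotation_K63_rotation: "is_rotation levi_K63_V levi_K63_E K63_rotation"
  unfolding K63_rotation_def
proof (rule is_rotation_cycle_of_list)
  fix v assume "v \<in> levi_K63_V"
  then obtain a where "a \<in> {1..26}" "v = levi_code a"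
    by (rule levi_K63_vertices_cases)
  then show "distinct (map levi_code (code_rotation (inv levi_code v))) \<and>
      set (map levi_code (code_rotation (inv levi_code v))) = nbrs levi_K63_E v"
    using code_rotation_props inj_on_subset[OF inj_levi_code subset_UNIV]
    by (simp add: nbrs_levi_K63 distinct_map)
qed

definition code_flag ::
  "nat \<times> nat \<times> bool \<Rightarrow> (nat + nat set) \<times> (nat + nat set) \<times> bool" where
  "code_flag = (\<lambda>(a, b, s). (levi_code a, levi_code b, s))"

lemma K63_twist_levi_code: "K63_twist {levi_code a, levi_code b} \<longleftrightarrow> code_twist {a, b}"
  using inj_levi_code by (auto simp: K63_twist_def code_twist_def doubleton_eq_iff inj_eq)

lemma tau0_code_flag: "tau0 K63_twist (code_flag x) = code_flag (tau0 code_twist x)"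
  by (auto simp: code_flag_def tau0_def K63_twist_levi_code split: prod.split)

lemma tau1_code_flag:
  "tau1 K63_rotation (code_flag x) = code_flag (tau1 code_rot x)"
  by (auto simp: code_flag_def tau1_def K63_rotation_levi_code inv_cycle_of_list rev_map
      cycle_of_list_map[OF inj_levi_code] split: prod.split)

lemma K63_faces_periodic:
  assumes "x \<in> flags levi_K63_E"
  shows "((tau1 K63_rotation \<circ> tau0 K63_twist) ^^ 4) x = x"
proof -
  obtain v u s where x: "x = (v, u, s)" by (cases x)
  then have "v \<in> levi_K63_V" "{v, u} \<in> levi_K63_E"
    using assms levi_edge_endpoint by (auto simp: flags_def)
  then obtain a b where a: "a \<in> {1..26}" "v = levi_code a" and b: "b \<in> set (code_rotation a)"
      "u = levi_code b"
    by (metis levi_K63_vertices_cases nbrs_levi_K63 nbrs_def mem_Collect_eq imageE)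
  have walk: "((tau1 K63_rotation \<circ> tau0 K63_twist) ^^ k) (code_flag y) =
      code_flag (((tau1 code_rot \<circ> tau0 code_twist) ^^ k) y)" for k y
    by (induction k) (simp_all add: tau0_code_flag tau1_code_flag)
  have "x = code_flag (a, b, s)"
    using x a b by (simp add: code_flag_def)
  moreover have "((tau1 code_rot \<circ> tau0 code_twist) ^^ 4) (a, b, s) = (a, b, s)"
    using code_faces_periodic a(1) b(1) by blast
  ultimately show ?thesis
    using walk by metis
qed

lemma levi_K63_edge:
  assumes "n \<in> {7..26}" "i \<in> triple n"
  shows "{levi_code i, levi_code n} \<in> levi_K63_E"
proof -
  have "i \<in> K63_vertices"
    using triple_props(4)[OF assms(1)] assms(2) by (auto simp: K63_vertices_def)
  moreover have "triple n \<in> K63_edges"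
    using assms(1) by (simp add: K63_edges_eq)
  moreover have "levi_code i = Inl i"
    using \<open>i \<in> K63_vertices\<close> by (simp add: levi_code_def K63_vertices_def)
  ultimately show ?thesis
    using assms by (auto simp: levi_code_def levi_edges_def)
qed

text \<open>The closed walk 1, 13, 6, 10 (points 1, 6 and the triples 136, 126) has
  three twisted edges.\<close>

lemma nonorientable_K63_twist: "nonorientable_scheme levi_K63_V levi_K63_E K63_twist"
  unfolding nonorientable_scheme_def
proof
  assume "\<exists>\<sigma> :: nat + nat set \<Rightarrow> bool.
    \<forall>u v. {u, v} \<in> levi_K63_E \<longrightarrow> (K63_twist {u, v} \<longleftrightarrow> \<sigma> u \<noteq> \<sigma> v)"
  then obtain \<sigma> :: "nat + nat set \<Rightarrow> bool" where
    \<sigma>: "\<forall>u v. {u, v} \<in> levi_K63_E \<longrightarrow> (K63_twist {u, v} \<longleftrightarrow> \<sigma> u \<noteq> \<sigma> v)" ..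
  have "\<sigma> (levi_code i) \<noteq> \<sigma> (levi_code n) \<longleftrightarrow> code_twist {i, n}"
    if "n \<in> {7..26}" "i \<in> triple n" for i n
    using \<sigma>[rule_format, OF levi_K63_edge[OF that]] by (simp add: K63_twist_levi_code)
  from this[of 13 1] this[of 10 1] this[of 10 6] this[of 13 6]
  have "\<sigma> (levi_code 1) \<noteq> \<sigma> (levi_code 13)" "\<sigma> (levi_code 1) \<noteq> \<sigma> (levi_code 10)"
    "\<sigma> (levi_code 6) \<noteq> \<sigma> (levi_code 10)" "\<sigma> (levi_code 6) = \<sigma> (levi_code 13)"
    by (simp_all add: triple_def K63_triples_def code_twist_doubleton twisted_code_edges_def)
  then show False by (cases "\<sigma> (levi_code 1)"; cases "\<sigma> (levi_code 6)") auto
qed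

lemma euler_genus_K63_rotation: "euler_genus levi_K63_V levi_K63_E K63_rotation K63_twist = 6"
  using embedding_scheme.euler_genus_quadrangular[OF
      embedding_scheme_levi_K63[OF is_rotation_K63_rotation], of isl K63_twist,
      OF levi_edge_bipartite levi_K63_min_degree K63_faces_periodic]
  by (simp add: card_levi_K63_vertices card_levi_K63_edges)

theorem lemma3p2:
  shows "hypergraph_nonorientable_genus K63_vertices K63_edges = 6"
  unfolding hypergraph_nonorientable_genus_def nonorientable_genus_def
proof (rule Least_equality)
  show "\<exists>rot tw. is_rotation levi_K63_V levi_K63_E rot \<and>
      nonorientable_scheme levi_K63_V levi_K63_E tw \<and> int 6 = euler_genus levi_K63_V levi_K63_E rot tw"
    using is_rotation_K63_rotation nonorientable_K63_twist euler_genus_K63_rotation by fastforce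
next
  fix c
  assume "\<exists>rot tw. is_rotation levi_K63_V levi_K63_E rot \<and>
      nonorientable_scheme levi_K63_V levi_K63_E tw \<and> int c = euler_genus levi_K63_V levi_K63_E rot tw"
  then obtain rot tw where rot: "is_rotation levi_K63_V levi_K63_E rot"
      and c: "int c = euler_genus levi_K63_V levi_K63_E rot tw"
    by blast
  have "6 \<le> int c"
    using euler_genus_levi_K63_ge_6[OF rot, of tw] c by simp
  then show "6 \<le> c" by simp
qed

end
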